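(* Let PS1 and PS2 be pure strategies (as in the context) with $m_{PS1}$ finite, and suppose PS2 is inferior to PS1, i.e. $\Delta_{PS1}(X)\ge\Delta_{PS2}(X)$ for every $X\in\mathcal{S}_{\mathrm{non}}$ and $\Delta_{PS1}(X)>\Delta_{PS2}(X)$ for some $X\in\mathcal{S}_{\mathrm{non}}$. Then for any mixed strategy MS derived from PS1 and PS2, $\max\{m_{MS}(X):X\in\mathcal{S}\}\ge\max\{m_{PS1}(X):X\in\mathcal{S}\}$.
   Context: A fitness function $f$ on a finite set is to be maximised. A metaheuristic generates populations $\Phi_0,\Phi_1,\dots$. Let $\mathcal{S}$ be the finite set of all populations, $\mathcal{S}_{\mathrm{opt}}$ those containing at least one optimal solution, $\mathcal{S}_{\mathrm{non}}=\mathcal{S}\setminus\mathcal{S}_{\mathrm{opt}}$. The sequence is a time-homogeneous Markov chain on $\mathcal{S}$ with transition probabilities $P(X,Y)=\Pr(\Phi_{t+1}=Y\mid\Phi_t=X)$, every state of $\mathcal{S}_{\mathrm{opt}}$ absorbing. The expected hitting time $m(X)\in[0,\infty]$ is the expected number of generations until first entering $\mathcal{S}_{\mathrm{opt}}$ from $\Phi_0=X$ ($m(X)=0$ on $\mathcal{S}_{\mathrm{opt}}$). A pure strategy is such a time-independent transition matrix. PS1, PS2 are pure strategies with transition matrices $P_1,P_2$ on the same $\mathcal{S}$ (with $\mathcal{S}_{\mathrm{opt}}$ absorbing), expected hitting times $m_{PS1},m_{PS2}$. A mixed strategy MS derived from PS1 and PS2 assigns to each $X\in\mathcal{S}$ probabilities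 $P_X(PS1)\in[0,1]$, $P_X(PS2)=1-P_X(PS1)$, and has transition matrix $P_{MS}(X,Y)=P_X(PS1)P_1(X,Y)+P_X(PS2)P_2(X,Y)$, with expected hitting time $m_{MS}$. With $d(X)=m_{PS1}(X)$, for $X\in\mathcal{S}_{\mathrm{non}}$: $\Delta_{PS1}(X)=d(X)-\sum_{Y\in\mathcal{S}_{\mathrm{non}}}P_1(X,Y)d(Y)$, $\Delta_{PS2}(X)=d(X)-\sum_{Y\in\mathcal{S}_{\mathrm{non}}}P_2(X,Y)d(Y)$. *)

theory Defs
  imports "HOL-Analysis.Analysis"
begin

text \<open>Populations form the finite type 'a (so the state space S is UNIV).
  Opt is the set S_opt of populations containing an optimal solution.
  A transition matrix is a function P :: 'a => 'a => real.\<close>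

definition transition_matrix :: "'a::finite set \<Rightarrow> ('a \<Rightarrow> 'a \<Rightarrow> real) \<Rightarrow> bool" where
  "transition_matrix Opt P \<longleftrightarrow>
     (\<forall>X Y. 0 \<le> P X Y) \<and> (\<forall>X. (\<Sum>Y\<in>UNIV. P X Y) = 1) \<and> (\<forall>X\<in>Opt. P X X = 1)"

text \<open>surv Opt P t X = Pr(Phi_0,...,Phi_t all lie outside Opt | Phi_0 = X) = Pr(T > t).\<close>
fun surv :: "'a::finite set \<Rightarrow> ('a \<Rightarrow> 'a \<Rightarrow> real) \<Rightarrow> nat \<Rightarrow> 'a \<Rightarrow> real" where
  "surv Opt P 0 X = (if X \<notin> Opt then 1 else 0)"
| "surv Opt P (Suc t) X = (if X \<notin> Opt then (\<Sum>Y\<in>- Opt. P X Y * surv Opt P t Y) else 0)"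

text \<open>Expected hitting time E[T] = sum over t >= 0 of Pr(T > t), a value in [0, infinity].\<close>
definition hitting_time :: "'a::finite set \<Rightarrow> ('a \<Rightarrow> 'a \<Rightarrow> real) \<Rightarrow> 'a \<Rightarrow> ennreal" where
  "hitting_time Opt P X = (\<Sum>t. ennreal (surv Opt P t X))"

text \<open>Mixed strategy transition matrix, with pX X = P_X(PS1).\<close>
definition mixed :: "('a \<Rightarrow> real) \<Rightarrow> ('a \<Rightarrow> 'a \<Rightarrow> real) \<Rightarrow> ('a \<Rightarrow> 'a \<Rightarrow> real) \<Rightarrow> 'a \<Rightarrow> 'a \<Rightarrow> real" where
  "mixed pX P1 P2 X Y = pX X * P1 X Y + (1 - pX X) * P2 X Y"

definition drift :: "'a::finite set \<Rightarrow> ('a \<Rightarrow> 'a \<Rightarrow> real) \<Rightarrow> ('a \<Rightarrow> real) \<Rightarrow> 'a \<Rightarrow> real" where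
  "drift Opt P d X = d X - (\<Sum>Y\<in>- Opt. P X Y * d Y)"

end

theory Submission
  imports Defs
begin

text \<open>Since d = m_PS1 is finite, it satisfies the first-step equation, i.e. its PS1-drift is 1
  on the non-optimal populations. The drift of d under the mixed strategy is a convex combination
  of its PS1- and PS2-drifts, hence at most 1 by inferiority of PS2. A function whose drift under a
  strategy is at most 1 is a lower bound for that strategy's expected hitting time (iterate the
  inequality n times and let n tend to infinity), so m_PS1 \<le> m_MS pointwise and the maxima
  compare accordingly.\<close>

lemma surv_nonneg:
  assumes "\<forall>X Y. 0 \<le> P X Y"
  shows "0 \<le> surv Opt P t X"
  using assms by (induction t arbitrary: X) (auto intro!: sum_nonneg mult_nonneg_nonneg)

lemma surv_Opt: "X \<in> Opt \<Longrightarrow> surv Opt P t X = 0"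
  by (cases t) auto

lemma hitting_time_Opt: "X \<in> Opt \<Longrightarrow> hitting_time Opt P X = 0"
  by (simp add: hitting_time_def surv_Opt)

lemma hitting_time_finite_summable:
  assumes "\<forall>X Y. 0 \<le> P X Y" and "hitting_time Opt P X < \<infinity>"
  shows "summable (\<lambda>t. surv Opt P t X)"
  using assms surv_nonneg[OF assms(1)] summable_suminf_not_top unfolding hitting_time_def
  by (metis infinity_ennreal_def less_irrefl)

lemma hitting_time_finite_eq_suminf:
  assumes "\<forall>X Y. 0 \<le> P X Y" and "hitting_time Opt P X < \<infinity>"
  shows "hitting_time Opt P X = ennreal (\<Sum>t. surv Opt P t X)"
  unfolding hitting_time_def
  using suminf_ennreal2[OF _ hitting_time_finite_summable[OF assms]] surv_nonneg[OF assms(1)]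
  by blast

lemma enn2real_hitting_time:
  assumes "\<forall>X Y. 0 \<le> P X Y" and "hitting_time Opt P X < \<infinity>"
  shows "enn2real (hitting_time Opt P X) = (\<Sum>t. surv Opt P t X)"
  using hitting_time_finite_eq_suminf[OF assms]
    suminf_nonneg[OF hitting_time_finite_summable[OF assms] surv_nonneg[OF assms(1)]]
  by simp

lemma drift_hitting_time_eq_1:
  assumes nn: "\<forall>X Y. 0 \<le> P X Y" and fin: "\<forall>X. hitting_time Opt P X < \<infinity>"
    and X: "X \<notin> Opt"
  shows "drift Opt P (\<lambda>Z. enn2real (hitting_time Opt P Z)) X = 1"
proof -
  let ?s = "\<lambda>t Y. surv Opt P t Y"
  have sm: "\<And>Y. summable (\<lambda>t. ?s t Y)"
    using hitting_time_finite_summable[OF nn] fin by blast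
  have "(\<Sum>t. ?s t X) = ?s 0 X + (\<Sum>t. ?s (Suc t) X)"
    using suminf_split_head[OF sm[of X]] by simp
  also have "(\<Sum>t. ?s (Suc t) X) = (\<Sum>t. \<Sum>Y\<in>- Opt. P X Y * ?s t Y)"
    using X by simp
  also have "\<dots> = (\<Sum>Y\<in>- Opt. \<Sum>t. P X Y * ?s t Y)"
    by (rule suminf_sum) (intro summable_mult sm)
  also have "\<dots> = (\<Sum>Y\<in>- Opt. P X Y * (\<Sum>t. ?s t Y))"
    by (intro sum.cong refl suminf_mult sm)
  finally show ?thesis
    using X fin by (simp add: drift_def enn2real_hitting_time[OF nn])
qed

lemma drift_mixed:
  "drift Opt (mixed pX P1 P2) d X = pX X * drift Opt P1 d X + (1 - pX X) * drift Opt P2 d X"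
  unfolding drift_def mixed_def
  by (simp add: sum.distrib sum_distrib_left sum_subtractf algebra_simps)

lemma surv_partial_sum_bound:
  fixes d :: "'a::finite \<Rightarrow> real"
  assumes nn: "\<forall>X Y. 0 \<le> P X Y"
    and sub: "\<And>X. X \<notin> Opt \<Longrightarrow> drift Opt P d X \<le> 1"
    and X: "X \<notin> Opt"
  shows "d X \<le> (\<Sum>t<n. surv Opt P t X) + Max (range d) * surv Opt P n X"
  using X
proof (induction n arbitrary: X)
  case 0
  then show ?case by simp
next
  case (Suc n)
  let ?M = "Max (range d)"
  have "d X \<le> 1 + (\<Sum>Y\<in>- Opt. P X Y * d Y)"
    using sub[OF Suc.prems] by (simp add: drift_def)
  also have "\<dots> \<le> 1 + (\<Sum>Y\<in>- Opt. P X Y * ((\<Sum>t<n. surv Opt P t Y) + ?M * surv Opt P n Y))"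
    using Suc.IH nn by (intro add_left_mono sum_mono mult_left_mono) auto
  also have "\<dots> = 1 + (\<Sum>t<n. surv Opt P (Suc t) X) + ?M * surv Opt P (Suc n) X"
    using Suc.prems
    by (simp add: algebra_simps sum.distrib sum_distrib_left sum.swap[of _ "-Opt"])
  also have "\<dots> = (\<Sum>t<Suc n. surv Opt P t X) + ?M * surv Opt P (Suc n) X"
    using Suc.prems by (simp only: sum.lessThan_Suc_shift surv.simps(1) if_True) simp
  finally show ?case .
qed

lemma hitting_time_ge_drift_le_1:
  fixes d :: "'a::finite \<Rightarrow> real"
  assumes nn: "\<forall>X Y. 0 \<le> P X Y"
    and sub: "\<And>X. X \<notin> Opt \<Longrightarrow> drift Opt P d X \<le> 1"
    and X: "X \<notin> Opt"
  shows "ennreal (d X) \<le> hitting_time Opt P X"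
proof (cases "hitting_time Opt P X < \<infinity>")
  case False
  then show ?thesis by (simp add: not_less top_unique)
next
  case True
  have sm: "summable (\<lambda>t. surv Opt P t X)"
    using hitting_time_finite_summable[OF nn True] .
  have "(\<lambda>n. (\<Sum>t<n. surv Opt P t X) + Max (range d) * surv Opt P n X)
      \<longlonglongrightarrow> (\<Sum>t. surv Opt P t X) + Max (range d) * 0"
    by (intro tendsto_intros summable_LIMSEQ sm summable_LIMSEQ_zero)
  then have "d X \<le> (\<Sum>t. surv Opt P t X)"
    using LIMSEQ_le_const surv_partial_sum_bound[OF nn sub X] by fastforce
  then show ?thesis
    using hitting_time_finite_eq_suminf[OF nn True] by (simp add: ennreal_leI)
qed

lemma Max_range_mono:
  fixes f g :: "'a::finite \<Rightarrow> 'b::linorder"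
  assumes "\<And>X. f X \<le> g X"
  shows "Max (range f) \<le> Max (range g)"
proof -
  obtain X where "Max (range f) = f X"
    using Max_in[of "range f"] by (metis UNIV_not_empty empty_is_image finite finite_imageI imageE)
  also have "f X \<le> g X" by (rule assms)
  also have "g X \<le> Max (range g)" by simp
  finally show ?thesis .
qed

theorem corollary3:
  fixes Opt :: "'a::finite set"
    and P1 P2 :: "'a \<Rightarrow> 'a \<Rightarrow> real"
    and pX :: "'a \<Rightarrow> real"
  assumes tm1: "transition_matrix Opt P1"
    and tm2: "transition_matrix Opt P2"
    and fin1: "\<forall>X. hitting_time Opt P1 X < \<infinity>"
    and inf_ge: "\<forall>X\<in>- Opt.
        drift Opt P1 (\<lambda>Z. enn2real (hitting_time Opt P1 Z)) X
          \<ge> drift Opt P2 (\<lambda>Z. enn2real (hitting_time Opt P1 Z)) X"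
    and inf_gt: "\<exists>X\<in>- Opt.
        drift Opt P1 (\<lambda>Z. enn2real (hitting_time Opt P1 Z)) X
          > drift Opt P2 (\<lambda>Z. enn2real (hitting_time Opt P1 Z)) X"
    and pX: "\<forall>X. 0 \<le> pX X \<and> pX X \<le> 1"
  shows "Max (range (hitting_time Opt (mixed pX P1 P2)))
           \<ge> Max (range (hitting_time Opt P1))"
proof (rule Max_range_mono)
  fix X
  let ?d = "\<lambda>Z. enn2real (hitting_time Opt P1 Z)"
  have nn1: "\<forall>X Y. 0 \<le> P1 X Y" and nn2: "\<forall>X Y. 0 \<le> P2 X Y"
    using tm1 tm2 unfolding transition_matrix_def by blast+
  have nn: "\<forall>X Y. 0 \<le> mixed pX P1 P2 X Y"
    using nn1 nn2 pX by (simp add: mixed_def)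
  have "drift Opt (mixed pX P1 P2) ?d Z \<le> 1" if "Z \<notin> Opt" for Z
  proof -
    have P1: "drift Opt P1 ?d Z = 1"
      using drift_hitting_time_eq_1[OF nn1 fin1 that] .
    moreover have "drift Opt P2 ?d Z \<le> 1"
      using inf_ge that unfolding P1[symmetric] by blast
    then have "(1 - pX Z) * drift Opt P2 ?d Z \<le> 1 - pX Z"
      using pX mult_left_mono[of _ 1 "1 - pX Z"] by simp
    ultimately show ?thesis by (simp add: drift_mixed)
  qed
  then have "X \<notin> Opt \<Longrightarrow> ennreal (?d X) \<le> hitting_time Opt (mixed pX P1 P2) X"
    by (rule hitting_time_ge_drift_le_1[OF nn])
  then show "hitting_time Opt P1 X \<le> hitting_time Opt (mixed pX P1 P2) X"
    using fin1 by (cases "X \<in> Opt") (auto simp: hitting_time_Opt less_top)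
qed

end
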